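(* For every integer $n\ge 0$, there is exactly one Dumont permutation of the second kind of length $2n$ avoiding the pattern $312$, i.e. $|\mathfrak D^2_{2n}(312)|=1$ (for $n=0$ the set consists of the empty permutation).
   Context: A Dumont permutation of the second kind of length $2n$ is a permutation $\pi\in\mathfrak S_{2n}$ such that for every $i=1,\dots,n$ one has $\pi(2i)<2i$ and $\pi(2i-1)\ge 2i-1$. $\mathfrak D^2_{2n}$ denotes the set of these. A permutation $\sigma$ contains a pattern $\tau\in\mathfrak S_k$ if some subsequence $(\sigma(i_1),\dots,\sigma(i_k))$, $i_1<\dots<i_k$, is order-isomorphic to $\tau$; otherwise $\sigma$ avoids $\tau$. $\mathfrak D^2_{2n}(T)$ denotes the set of permutations in $\mathfrak D^2_{2n}$ avoiding every pattern in $T$. *)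

theory Defs
  imports "HOL-Combinatorics.Permutations"
begin

(* A permutation of [m] = {1..m} is a function nat => nat that permutes {1..m}
   (identity outside). Patterns tau in S_k are likewise functions permuting {1..k}. *)

definition dumont2 :: "nat \<Rightarrow> (nat \<Rightarrow> nat) set" where
  "dumont2 n = {\<pi>. \<pi> permutes {1..2*n} \<and>
      (\<forall>i\<in>{1..n}. \<pi> (2*i) < 2*i \<and> \<pi> (2*i - 1) \<ge> 2*i - 1)}"

definition contains_pattern :: "nat \<Rightarrow> (nat \<Rightarrow> nat) \<Rightarrow> nat \<Rightarrow> (nat \<Rightarrow> nat) \<Rightarrow> bool" where
  "contains_pattern m \<sigma> k \<tau> \<longleftrightarrow>
     (\<exists>idx :: nat \<Rightarrow> nat. strict_mono_on {1..k} idx \<and> idx ` {1..k} \<subseteq> {1..m} \<and>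
        (\<forall>a\<in>{1..k}. \<forall>b\<in>{1..k}. \<sigma> (idx a) < \<sigma> (idx b) \<longleftrightarrow> \<tau> a < \<tau> b))"

definition avoids :: "nat \<Rightarrow> (nat \<Rightarrow> nat) \<Rightarrow> nat \<Rightarrow> (nat \<Rightarrow> nat) \<Rightarrow> bool" where
  "avoids m \<sigma> k \<tau> \<longleftrightarrow> \<not> contains_pattern m \<sigma> k \<tau>"

definition pat312 :: "nat \<Rightarrow> nat" where
  "pat312 = (\<lambda>i. if i = 1 then 3 else if i = 2 then 1 else if i = 3 then 2 else i)"

definition dumont2_avoiding :: "nat \<Rightarrow> nat \<Rightarrow> (nat \<Rightarrow> nat) \<Rightarrow> (nat \<Rightarrow> nat) set" where
  "dumont2_avoiding n k \<tau> = {\<pi> \<in> dumont2 n. avoids (2*n) \<pi> k \<tau>}"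

end

theory Submission
  imports Defs
begin

(* The unique permutation is 2 1 4 3 ... 2n (2n-1): its only inversions are between adjacent
   positions, whereas an occurrence of 312 needs two inversions starting at the same position.
   Conversely, let \<pi> be a 312-avoiding Dumont permutation of the second kind that already swaps
   the first i blocks {2j-1, 2j}, so that it maps {1..2i} onto itself. In the next block,
   \<pi>(2i+2) < 2i+2 and the values up to 2i are used up, so \<pi>(2i+2) = 2i+1, and then
   \<pi>(2i+1) \<ge> 2i+2. If \<pi>(2i+1) > 2i+2, the value 2i+2 sits at some later position p,
   and the positions 2i+1 < 2i+2 < p form a 312. *)

definition pair_swap :: "nat \<Rightarrow> nat \<Rightarrow> nat" where
  "pair_swap n x = (if x \<in> {1..2*n} then if odd x then x + 1 else x - 1 else x)"

lemma pair_swap_pair_swap [simp]: "pair_swap n (pair_swap n x) = x"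
  unfolding pair_swap_def by (auto; presburger?)

lemma pair_swap_image_initial:
  assumes "i \<le> n"
  shows "pair_swap n ` {1..2*i} = {1..2*i}"
proof -
  have into: "pair_swap n ` {1..2*i} \<subseteq> {1..2*i}"
    using assms unfolding pair_swap_def by auto presburger+
  have "{1..2*i} = pair_swap n ` pair_swap n ` {1..2*i}"
    by (simp add: image_comp comp_def)
  also have "\<dots> \<subseteq> pair_swap n ` {1..2*i}"
    using into by (rule image_mono)
  finally show ?thesis
    using into by blast
qed

lemma pair_swap_permutes: "pair_swap n permutes {1..2*n}"
proof (rule bij_imp_permutes)
  show "bij_betw (pair_swap n) {1..2*n} {1..2*n}"
    by (rule bij_betw_byWitness[where f' = "pair_swap n"])
      (use pair_swap_image_initial[of n n] in simp_all)
qed (auto simp: pair_swap_def)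

lemma pair_swap_in_dumont2: "pair_swap n \<in> dumont2 n"
  unfolding dumont2_def using pair_swap_permutes[of n] by (auto simp: pair_swap_def)

lemma pair_swap_inversion_adjacent:
  assumes "x < y" "x \<in> {1..2*n}" "y \<in> {1..2*n}" "pair_swap n y < pair_swap n x"
  shows "y = x + 1"
  using assms unfolding pair_swap_def by (auto split: if_splits; presburger?)

lemma contains_312_iff:
  "contains_pattern m \<sigma> 3 pat312 \<longleftrightarrow>
     (\<exists>i j k. 1 \<le> i \<and> i < j \<and> j < k \<and> k \<le> m \<and> \<sigma> j < \<sigma> k \<and> \<sigma> k < \<sigma> i)"
proof
  assume "contains_pattern m \<sigma> 3 pat312"
  then obtain idx where mono: "strict_mono_on {1..3} idx" and range: "idx ` {1..3} \<subseteq> {1..m}"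
    and order: "\<forall>a\<in>{1..3}. \<forall>b\<in>{1..3}. \<sigma> (idx a) < \<sigma> (idx b) \<longleftrightarrow> pat312 a < pat312 b"
    unfolding contains_pattern_def by blast
  have "idx 1 < idx 2" "idx 2 < idx 3"
    using mono by (auto simp: strict_mono_on_def)
  moreover have "idx 1 \<in> {1..m}" "idx 3 \<in> {1..m}"
    using subsetD[OF range, OF imageI, of 1] subsetD[OF range, OF imageI, of 3] by auto
  moreover have "\<sigma> (idx 2) < \<sigma> (idx 3)" "\<sigma> (idx 3) < \<sigma> (idx 1)"
    using order by (auto simp: pat312_def)
  ultimately show "\<exists>i j k. 1 \<le> i \<and> i < j \<and> j < k \<and> k \<le> m \<and> \<sigma> j < \<sigma> k \<and> \<sigma> k < \<sigma> i"
    by (intro exI[of _ "idx 1"] exI[of _ "idx 2"] exI[of _ "idx 3"]) auto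
next
  assume "\<exists>i j k. 1 \<le> i \<and> i < j \<and> j < k \<and> k \<le> m \<and> \<sigma> j < \<sigma> k \<and> \<sigma> k < \<sigma> i"
  then obtain i j k where ijk: "1 \<le> i" "i < j" "j < k" "k \<le> m" "\<sigma> j < \<sigma> k" "\<sigma> k < \<sigma> i"
    by blast
  define idx where "idx a = (if a = 1 then i else if a = 2 then j else k)" for a :: nat
  have cases3: "a = 1 \<or> a = 2 \<or> a = 3" if "a \<in> {1..3}" for a :: nat
    using that by auto
  show "contains_pattern m \<sigma> 3 pat312"
    unfolding contains_pattern_def
  proof (intro exI conjI ballI)
    show "strict_mono_on {1..3} idx"
      using ijk by (auto simp: strict_mono_on_def idx_def)
    show "idx ` {1..3} \<subseteq> {1..m}"
      using ijk by (auto simp: idx_def)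
    fix a b :: nat
    assume "a \<in> {1..3}" "b \<in> {1..3}"
    then show "\<sigma> (idx a) < \<sigma> (idx b) \<longleftrightarrow> pat312 a < pat312 b"
      using cases3[of a] cases3[of b] ijk by (auto simp: idx_def pat312_def)
  qed
qed

lemma avoids_312_if_inversions_adjacent:
  assumes "\<And>x y. x < y \<Longrightarrow> x \<in> {1..m} \<Longrightarrow> y \<in> {1..m} \<Longrightarrow> \<sigma> y < \<sigma> x \<Longrightarrow> y = x + 1"
  shows "avoids m \<sigma> 3 pat312"
  unfolding avoids_def contains_312_iff
proof
  assume "\<exists>i j k. 1 \<le> i \<and> i < j \<and> j < k \<and> k \<le> m \<and> \<sigma> j < \<sigma> k \<and> \<sigma> k < \<sigma> i"
  then obtain i j k where "1 \<le> i" "i < j" "j < k" "k \<le> m" "\<sigma> j < \<sigma> k" "\<sigma> k < \<sigma> i"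
    by blast
  then have "j = i + 1" "k = i + 1"
    using assms[of i j] assms[of i k] by auto
  with \<open>j < k\<close> show False by simp
qed

lemma pair_swap_avoids_312: "avoids (2*n) (pair_swap n) 3 pat312"
  by (rule avoids_312_if_inversions_adjacent) (rule pair_swap_inversion_adjacent)

lemma dumont2_avoiding_312_next_block:
  assumes \<pi>: "\<pi> \<in> dumont2_avoiding n 3 pat312" and "Suc i \<le> n"
    and initial: "\<forall>q\<in>{1..2*i}. \<pi> q = pair_swap n q"
  shows "\<pi> (2*i + 1) = 2*i + 2" and "\<pi> (2*i + 2) = 2*i + 1"
proof -
  have perm: "\<pi> permutes {1..2*n}" and avoid: "avoids (2*n) \<pi> 3 pat312"
    and dumont: "\<forall>j\<in>{1..n}. \<pi> (2*j) < 2*j \<and> 2*j - 1 \<le> \<pi> (2*j - 1)"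
    using \<pi> by (auto simp: dumont2_avoiding_def dumont2_def)
  have block: "\<pi> (2*i + 2) < 2*i + 2" "2*i + 1 \<le> \<pi> (2*i + 1)"
    using dumont[rule_format, of "Suc i"] \<open>Suc i \<le> n\<close> by simp_all
  have inj: "inj \<pi>"
    using perm by (rule permutes_inj)
  have in_range: "\<pi> q \<in> {1..2*n} \<longleftrightarrow> q \<in> {1..2*n}" for q
    using perm by (rule permutes_in_image)
  have "\<pi> ` {1..2*i} = pair_swap n ` {1..2*i}"
    by (rule image_cong) (simp_all add: initial)
  also have "\<dots> = {1..2*i}"
    using \<open>Suc i \<le> n\<close> by (intro pair_swap_image_initial) simp
  finally have image_initial: "\<pi> ` {1..2*i} = {1..2*i}" .
  have value_beyond_initial: "2*i < \<pi> q" if "q \<in> {1..2*n}" "2*i < q" for q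
  proof (rule ccontr)
    assume "\<not> 2*i < \<pi> q"
    then have "\<pi> q \<in> \<pi> ` {1..2*i}"
      using image_initial in_range[of q] that(1) by auto
    then have "q \<in> {1..2*i}"
      using inj by (simp add: inj_image_mem_iff)
    with that(2) show False
      by simp
  qed
  have even_pos: "\<pi> (2*i + 2) = 2*i + 1"
    using value_beyond_initial[of "2*i + 2"] block(1) \<open>Suc i \<le> n\<close> by auto
  have "\<pi> (2*i + 1) \<noteq> \<pi> (2*i + 2)"
    using inj by (simp add: inj_eq)
  with block(2) even_pos have odd_ge: "2*i + 2 \<le> \<pi> (2*i + 1)"
    by simp
  show "\<pi> (2*i + 2) = 2*i + 1"
    by (rule even_pos)
  show "\<pi> (2*i + 1) = 2*i + 2"
  proof (rule ccontr)
    assume "\<pi> (2*i + 1) \<noteq> 2*i + 2"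
    with odd_ge have big: "2*i + 2 < \<pi> (2*i + 1)"
      by simp
    have "2*i + 2 \<in> {1..2*n}"
      using \<open>Suc i \<le> n\<close> by simp
    then obtain p where p: "p \<in> {1..2*n}" "\<pi> p = 2*i + 2"
      using permutes_image[OF perm] by (metis imageE)
    have "p \<notin> {1..2*i}"
    proof
      assume "p \<in> {1..2*i}"
      then have "\<pi> p \<in> {1..2*i}"
        using image_initial by blast
      with p(2) show False
        by simp
    qed
    moreover have "p \<noteq> 2*i + 1" "p \<noteq> 2*i + 2"
      using p(2) big even_pos by auto
    ultimately have "2*i + 2 < p"
      using p(1) by auto
    then have "contains_pattern (2*n) \<pi> 3 pat312"
      unfolding contains_312_iff
      using p big even_pos by (intro exI[of _ "2*i + 1"] exI[of _ "2*i + 2"] exI[of _ p]) auto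
    with avoid show False
      by (simp add: avoids_def)
  qed
qed

lemma dumont2_avoiding_312_initial:
  assumes "\<pi> \<in> dumont2_avoiding n 3 pat312" and "i \<le> n"
  shows "\<forall>q\<in>{1..2*i}. \<pi> q = pair_swap n q"
  using \<open>i \<le> n\<close>
proof (induction i)
  case 0
  then show ?case by simp
next
  case (Suc i)
  then have initial: "\<forall>q\<in>{1..2*i}. \<pi> q = pair_swap n q"
    by simp
  have "{1..2 * Suc i} = insert (2*i + 1) (insert (2*i + 2) {1..2*i})"
    by auto
  with initial dumont2_avoiding_312_next_block[OF assms(1) Suc.prems initial] Suc.prems
  show ?case
    by (auto simp: pair_swap_def)
qed

lemma dumont2_avoiding_312_eq_pair_swap:
  assumes \<pi>: "\<pi> \<in> dumont2_avoiding n 3 pat312"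
  shows "\<pi> = pair_swap n"
proof
  fix x
  have perm: "\<pi> permutes {1..2*n}"
    using \<pi> by (simp add: dumont2_avoiding_def dumont2_def)
  show "\<pi> x = pair_swap n x"
  proof (cases "x \<in> {1..2*n}")
    case True
    then show ?thesis
      using dumont2_avoiding_312_initial[OF \<pi> order.refl] by blast
  next
    case False
    then show ?thesis
      using permutes_not_in[OF perm False] by (auto simp: pair_swap_def)
  qed
qed

theorem theorem2p4:
  fixes n :: nat
  shows "card (dumont2_avoiding n 3 pat312) = 1"
proof -
  have "dumont2_avoiding n 3 pat312 = {pair_swap n}"
    using dumont2_avoiding_312_eq_pair_swap pair_swap_in_dumont2 pair_swap_avoids_312
    by (auto simp: dumont2_avoiding_def)
  then show ?thesis
    by simp
qed

end
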